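(* Let $\mathcal{X}\subseteq\mathbb{R}^n$, let $f=(f_1,\dots,f_m):\mathcal{X}\to\mathbb{R}^m$, let $\alpha\in\mathbb{R}^m$, and define \[ \mathcal{F}=\{f(x)\mid x\in\mathcal{X}\},\qquad \mathcal{G}=\Bigl\{\frac{f(x)}{\sum_{i=1}^m\alpha_if_i(x)}\Bigm| x\in\mathcal{X}\Bigr\}. \] Assume $\mathcal{F}$ and $\mathcal{G}$ are nonempty and there is $\epsilon>0$ with $\sum_{i=1}^m\alpha_if_i(x)>\epsilon$ for all $x\in\mathcal{X}$. Then: (i) If $\mathcal{F}$ is bounded, then $\operatorname{conv}(\mathcal{G})=\{g\in\mathbb{R}^m\mid \exists\rho\ge0 \text{ with } g\in\rho\operatorname{conv}(\mathcal{F}),\ \alpha^\top g=1\}$. (ii) If $\mathcal{F}$ is bounded and in addition $f_1(x)=1$ for all $x\in\mathcal{X}$, then $\operatorname{conv}(\mathcal{F})=\{f\in\mathbb{R}^m\mid \exists\sigma\ge0\text{ with } f\in\sigma\operatorname{conv}(\mathcal{G}),\ f_1=1\}$. (iii) (Without assuming boundedness of $\mathcal{F}$.) $\operatorname{cl}\operatorname{conv}(\mathcal{G})=\{g\in\mathbb{R}^m\mid\exists\rho\ge0\text{ with } g\in\rho\operatorname{cl}\operatorname{conv}(\mathcal{F}),\ \alpha^\top g=1\}$.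
   Context: For a set $K$ and $\lambda\ge0$: $\lambda K=\{\lambda k\mid k\in K\}$ if $\lambda>0$, and $0K$ denotes the recession cone of $K$. $\operatorname{cl}$ denotes closure and $\operatorname{conv}$ convex hull. *)

theory Defs
  imports "HOL-Analysis.Analysis"
begin

definition rec_cone :: "'a::real_vector set \<Rightarrow> 'a set" where
  "rec_cone K = {d. \<forall>x\<in>K. \<forall>t::real. t \<ge> 0 \<longrightarrow> x + t *\<^sub>R d \<in> K}"

definition scale_set :: "real \<Rightarrow> 'a::real_vector set \<Rightarrow> 'a set" where
  "scale_set l K = (if l > 0 then (\<lambda>k. l *\<^sub>R k) ` K else rec_cone K)"

end

theory Submission
  imports Defs "HOL-Real_Asymp.Real_Asymp"
begin

text \<open>
  Writing \<open>p(y) = y / (\<alpha> \<bullet> y)\<close> for the perspective map, \<open>\<G> = p(\<F>)\<close>. Since \<open>\<alpha> \<bullet> y > 0\<close> on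
  \<open>conv \<F>\<close>, the map \<open>p\<close> commutes with convex hulls, and for any set \<open>K\<close> on which \<open>\<alpha> \<bullet> y > 0\<close>
  the slice \<open>{g. \<exists>\<rho>\<ge>0. g \<in> \<rho>K, \<alpha> \<bullet> g = 1}\<close> is \<open>p(K)\<close> together with the recession
  directions of \<open>K\<close> lying on the hyperplane. For bounded \<open>K\<close> the latter part is empty,
  giving (i); (ii) is the same identity for \<open>K = conv \<G>\<close> and the hyperplane \<open>h\<^sub>1 = 1\<close>,
  whose perspective \<open>h \<mapsto> h / h\<^sub>1\<close> inverts \<open>p\<close> on \<open>conv \<F>\<close>. For (iii), a limit
  of points \<open>p(y\<^sub>k) = u\<^sub>k y\<^sub>k\<close> with \<open>u\<^sub>k \<in> (0, 1/\<epsilon>]\<close> is either \<open>p\<close> of a point of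
  \<open>cl conv \<F>\<close> (when \<open>u\<^sub>k\<close> has a positive limit) or a recession direction (when \<open>u\<^sub>k \<rightarrow> 0\<close>);
  conversely every recession direction \<open>d\<close> is the limit of \<open>p(y + n d)\<close>.
\<close>

definition persp :: "'a::real_inner \<Rightarrow> 'a \<Rightarrow> 'a" where
  "persp a y = (1 / (a \<bullet> y)) *\<^sub>R y"

lemma inner_persp: "a \<bullet> y \<noteq> 0 \<Longrightarrow> a \<bullet> persp a y = 1"
  by (simp add: persp_def)

lemma persp_persp: "b \<bullet> y = 1 \<Longrightarrow> a \<bullet> y \<noteq> 0 \<Longrightarrow> persp b (persp a y) = y"
  by (simp add: persp_def)

lemma convex_hull_subset_halfspace_gt:
  "\<forall>y\<in>F. a \<bullet> y > e \<Longrightarrow> convex hull F \<subseteq> {y. a \<bullet> y > e}"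
  by (rule hull_minimal) (auto simp: convex_halfspace_gt)

lemma convex_persp_image:
  assumes "convex K" and pos: "\<forall>y\<in>K. a \<bullet> y > 0"
  shows "convex (persp a ` K)"
proof (rule convexI)
  fix x y and u v :: real
  assume "x \<in> persp a ` K" "y \<in> persp a ` K" and uv: "0 \<le> u" "0 \<le> v" "u + v = 1"
  then obtain p q where pq: "p \<in> K" "q \<in> K" and xy: "x = persp a p" "y = persp a q"
    by auto
  have ap: "a \<bullet> p > 0" and aq: "a \<bullet> q > 0" using pos pq by auto
  define c where "c = u / (a \<bullet> p) + v / (a \<bullet> q)"
  have "u > 0 \<or> v > 0"
    using uv by linarith
  then have "c > 0"
    using uv ap aq unfolding c_def by (auto intro: add_pos_nonneg add_nonneg_pos)
  define w where "w = (u / (a \<bullet> p) / c) *\<^sub>R p + (v / (a \<bullet> q) / c) *\<^sub>R q"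
  \<comment> \<open>\<open>u x + v y = p(w)\<close>: reweight \<open>p, q\<close> by the reciprocals of their heights\<close>
  have "u / (a \<bullet> p) / c + v / (a \<bullet> q) / c = c / c"
    by (simp only: c_def add_divide_distrib)
  then have "w \<in> K"
    unfolding w_def using \<open>c > 0\<close> uv ap aq by (intro convexD[OF \<open>convex K\<close> pq]) auto
  moreover have "a \<bullet> w = 1 / c"
    using ap aq uv by (simp add: w_def inner_add_right add_divide_distrib[symmetric])
  then have "persp a w = u *\<^sub>R x + v *\<^sub>R y"
    using ap aq \<open>c > 0\<close> by (simp add: persp_def xy w_def scaleR_add_right)
  ultimately show "u *\<^sub>R x + v *\<^sub>R y \<in> persp a ` K"
    by (metis image_eqI)
qed

lemma convex_persp_preimage:
  assumes "convex S"
  shows "convex {y. a \<bullet> y > 0 \<and> persp a y \<in> S}"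
proof (rule convexI)
  fix p q and u v :: real
  assume p: "p \<in> {y. a \<bullet> y > 0 \<and> persp a y \<in> S}" and q: "q \<in> {y. a \<bullet> y > 0 \<and> persp a y \<in> S}"
    and uv: "0 \<le> u" "0 \<le> v" "u + v = 1"
  have ap: "a \<bullet> p > 0" and aq: "a \<bullet> q > 0" using p q by auto
  define w where "w = u *\<^sub>R p + v *\<^sub>R q"
  have "u > 0 \<or> v > 0"
    using uv by linarith
  then have aw: "a \<bullet> w > 0"
    using uv ap aq unfolding w_def inner_add_right inner_scaleR_right
    by (auto intro: add_pos_nonneg add_nonneg_pos)
  have "persp a w = (u * (a \<bullet> p) / (a \<bullet> w)) *\<^sub>R persp a p + (v * (a \<bullet> q) / (a \<bullet> w)) *\<^sub>R persp a q"
    using ap aq aw by (simp add: persp_def w_def scaleR_add_right)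
  also have "\<dots> \<in> S"
    using p q uv ap aq aw
    by (intro convexD[OF assms]) (auto simp: add_divide_distrib[symmetric] w_def inner_add_right)
  finally show "u *\<^sub>R p + v *\<^sub>R q \<in> {y. a \<bullet> y > 0 \<and> persp a y \<in> S}"
    using aw by (simp add: w_def)
qed

lemma convex_hull_persp:
  assumes pos: "\<forall>y\<in>F. a \<bullet> y > 0"
  shows "convex hull (persp a ` F) = persp a ` (convex hull F)"
proof
  have "\<forall>y\<in>convex hull F. a \<bullet> y > 0"
    using convex_hull_subset_halfspace_gt[OF pos] by auto
  then have "convex (persp a ` (convex hull F))"
    by (simp add: convex_persp_image)
  then show "convex hull (persp a ` F) \<subseteq> persp a ` (convex hull F)"
    by (intro hull_minimal[where S=convex]) (auto intro: hull_inc)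
next
  have "convex hull F \<subseteq> {y. a \<bullet> y > 0 \<and> persp a y \<in> convex hull (persp a ` F)}"
    by (rule hull_minimal[where S=convex])
      (use pos in \<open>auto intro: hull_inc convex_persp_preimage\<close>)
  then show "persp a ` (convex hull F) \<subseteq> convex hull (persp a ` F)"
    by auto
qed

lemma bounded_persp_image:
  assumes pos: "\<forall>y\<in>F. a \<bullet> y > e" and "e > 0" and "bounded F"
  shows "bounded (persp a ` F)"
proof -
  obtain B where B: "\<forall>y\<in>F. norm y \<le> B"
    using \<open>bounded F\<close> bounded_iff by auto
  have "norm (persp a y) \<le> B / e" if "y \<in> F" for y
  proof -
    have ay: "a \<bullet> y > e" using pos that by auto
    have "norm (persp a y) = norm y / (a \<bullet> y)"
      using ay \<open>e > 0\<close> by (simp add: persp_def)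
    also have "\<dots> \<le> norm y / e"
      using ay \<open>e > 0\<close> by (simp add: frac_le)
    also have "\<dots> \<le> B / e"
      using B that \<open>e > 0\<close> by (simp add: divide_right_mono)
    finally show ?thesis .
  qed
  then show ?thesis
    unfolding bounded_iff by auto
qed

lemma rec_cone_bounded:
  fixes K :: "'a::real_normed_vector set"
  assumes "bounded K" "K \<noteq> {}"
  shows "rec_cone K = {0}"
proof -
  have "d = 0" if d: "d \<in> rec_cone K" for d
  proof (rule ccontr)
    assume "d \<noteq> 0"
    obtain B where B: "\<forall>x\<in>K. norm x \<le> B" using assms(1) bounded_iff by auto
    obtain x where x: "x \<in> K" using assms(2) by auto
    define t where "t = (B + norm x + 1) / norm d"
    have "B \<ge> 0" using B x norm_ge_zero order_trans by blast
    then have "t \<ge> 0" using \<open>d \<noteq> 0\<close> by (simp add: t_def)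
    then have "norm (x + t *\<^sub>R d) \<le> B"
      using B d x by (auto simp: rec_cone_def)
    moreover have "norm (t *\<^sub>R d) = B + norm x + 1"
      using \<open>d \<noteq> 0\<close> \<open>t \<ge> 0\<close> \<open>B \<ge> 0\<close> by (simp add: t_def)
    moreover have "norm (t *\<^sub>R d) \<le> norm (x + t *\<^sub>R d) + norm x"
      by (metis add_diff_cancel_left' norm_triangle_ineq4)
    ultimately show False by linarith
  qed
  then show ?thesis
    by (auto simp: rec_cone_def)
qed

lemma hyperplane_slice_scale_set:
  assumes pos: "\<forall>y\<in>K. a \<bullet> y > 0"
  shows "{g. \<exists>\<rho>\<ge>0. g \<in> scale_set \<rho> K \<and> a \<bullet> g = 1}
           = persp a ` K \<union> {d \<in> rec_cone K. a \<bullet> d = 1}"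
proof safe
  fix g \<rho> assume "0 \<le> \<rho>" "g \<in> scale_set \<rho> K" "a \<bullet> g = 1" "g \<notin> persp a ` K"
  show "g \<in> rec_cone K"
  proof (cases "\<rho> > 0")
    case True
    then obtain y where y: "y \<in> K" "g = \<rho> *\<^sub>R y"
      using \<open>g \<in> scale_set \<rho> K\<close> by (auto simp: scale_set_def)
    then have "\<rho> * (a \<bullet> y) = 1"
      using \<open>a \<bullet> g = 1\<close> by simp
    then have "\<rho> = 1 / (a \<bullet> y)"
      by (metis mult_zero_right nonzero_eq_divide_eq zero_neq_one)
    then have "g = persp a y"
      using y by (simp add: persp_def)
    then show ?thesis
      using y \<open>g \<notin> persp a ` K\<close> by auto
  next
    case False
    then show ?thesis
      using \<open>g \<in> scale_set \<rho> K\<close> by (simp add: scale_set_def)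
  qed
next
  fix y assume "y \<in> K"
  then have "a \<bullet> y > 0" using pos by auto
  then show "\<exists>\<rho>\<ge>0. persp a y \<in> scale_set \<rho> K \<and> a \<bullet> persp a y = 1"
    using \<open>y \<in> K\<close> by (intro exI[of _ "1 / (a \<bullet> y)"]) (auto simp: scale_set_def persp_def)
next
  fix d assume "d \<in> rec_cone K" "a \<bullet> d = 1"
  then show "\<exists>\<rho>\<ge>0. d \<in> scale_set \<rho> K \<and> a \<bullet> d = 1"
    by (intro exI[of _ 0]) (simp add: scale_set_def)
qed

lemma hyperplane_slice_scale_set_bounded:
  assumes "\<forall>y\<in>K. a \<bullet> y > 0" "bounded K" "K \<noteq> {}"
  shows "{g. \<exists>\<rho>\<ge>0. g \<in> scale_set \<rho> K \<and> a \<bullet> g = 1} = persp a ` K"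
  using hyperplane_slice_scale_set[OF assms(1)] rec_cone_bounded[OF assms(2,3)] by auto

lemma rec_cone_limit:
  fixes C :: "'a::real_normed_vector set"
  assumes "convex C" "closed C" and y: "\<And>k. y k \<in> C" and t: "\<And>k. t k \<ge> 0"
    and "t \<longlonglongrightarrow> 0" and ty: "(\<lambda>k. t k *\<^sub>R y k) \<longlonglongrightarrow> d"
  shows "d \<in> rec_cone C"
  unfolding rec_cone_def
proof safe
  fix x and s :: real assume "x \<in> C" "0 \<le> s"
  define w where "w k = (1 - s * t k) *\<^sub>R x + s *\<^sub>R (t k *\<^sub>R y k)" for k
  have "w \<longlonglongrightarrow> (1 - s * 0) *\<^sub>R x + s *\<^sub>R d"
    unfolding w_def
    by (intro tendsto_intros \<open>t \<longlonglongrightarrow> 0\<close> ty)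
  then have lim: "w \<longlonglongrightarrow> x + s *\<^sub>R d" by simp
  have "eventually (\<lambda>k. s * t k < 1) sequentially"
    using order_tendstoD(2)[OF tendsto_mult_right_zero[OF \<open>t \<longlonglongrightarrow> 0\<close>, of s]] by simp
  then have "eventually (\<lambda>k. w k \<in> C) sequentially"
  proof eventually_elim
    case (elim k)
    have "w k = (1 - s * t k) *\<^sub>R x + (s * t k) *\<^sub>R y k"
      by (simp add: w_def)
    also have "\<dots> \<in> C"
      using elim t[of k] \<open>0 \<le> s\<close> by (intro convexD[OF \<open>convex C\<close> \<open>x \<in> C\<close> y]) auto
    finally show ?case .
  qed
  then show "x + s *\<^sub>R d \<in> C"
    using Lim_in_closed_set[OF \<open>closed C\<close> _ trivial_limit_sequentially lim] by blast
qed

lemma persp_tendsto_rec_direction: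
  assumes "d \<in> rec_cone C" "y \<in> C" "a \<bullet> y > 0" "a \<bullet> d = 1"
  shows "(\<lambda>n. persp a (y + real n *\<^sub>R d)) \<longlonglongrightarrow> d"
proof -
  define c where "c = a \<bullet> y"
  have "(\<lambda>n. (1 / (c + real n)) *\<^sub>R y + (real n / (c + real n)) *\<^sub>R d) \<longlonglongrightarrow> 0 *\<^sub>R y + 1 *\<^sub>R d"
    using \<open>a \<bullet> y > 0\<close> unfolding c_def by (intro tendsto_intros) real_asymp+
  then show ?thesis
    using assms(4) by (simp add: persp_def c_def inner_add_right scaleR_add_right)
qed

lemma closure_subset_halfspace_ge:
  "\<forall>y\<in>K. a \<bullet> y > e \<Longrightarrow> closure K \<subseteq> {y. a \<bullet> y \<ge> e}"
  by (rule closure_minimal) (auto simp: closed_halfspace_ge)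

lemma closure_persp_image_subset:
  assumes "convex K" and pos: "\<forall>y\<in>K. a \<bullet> y > e" and "e > 0"
  shows "closure (persp a ` K) \<subseteq> persp a ` closure K \<union> {d \<in> rec_cone (closure K). a \<bullet> d = 1}"
proof
  fix g assume "g \<in> closure (persp a ` K)"
  then obtain z where z: "\<forall>n. z n \<in> persp a ` K" and "z \<longlonglongrightarrow> g"
    unfolding closure_sequential by blast
  then have "\<forall>n. \<exists>y. y \<in> K \<and> z n = persp a y"
    by blast
  then obtain y where y: "\<And>n. y n \<in> K" and zy: "\<And>n. z n = persp a (y n)"
    using choice[of "\<lambda>n y. y \<in> K \<and> z n = persp a y"] by blast
  have ay: "a \<bullet> y n > e" for n
    using pos y by blast
  have "(\<lambda>n. a \<bullet> z n) \<longlonglongrightarrow> a \<bullet> g"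
    by (intro tendsto_intros \<open>z \<longlonglongrightarrow> g\<close>)
  moreover have "(\<lambda>n. a \<bullet> z n) = (\<lambda>n. 1)"
  proof
    fix n
    show "a \<bullet> z n = 1"
      using ay[of n] \<open>e > 0\<close> by (simp add: zy inner_persp)
  qed
  ultimately have ag: "a \<bullet> g = 1"
    by (simp add: LIMSEQ_const_iff)
  define u where "u n = 1 / (a \<bullet> y n)" for n
  have u: "u n > 0" "u n \<le> 1 / e" for n
    using ay[of n] \<open>e > 0\<close> by (simp_all add: u_def frac_le)
  then have "\<forall>n. u n \<in> {0..1/e}"
    by (simp add: less_imp_le)
  then obtain l r where "l \<in> {0..1/e}" "strict_mono r" and ul: "(u \<circ> r) \<longlonglongrightarrow> l"
    by (rule seq_compactE[OF compact_imp_seq_compact[OF compact_Icc]])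
  have zu: "z n = u n *\<^sub>R y n" for n
    by (simp add: zy u_def persp_def)
  have zr: "(\<lambda>k. u (r k) *\<^sub>R y (r k)) \<longlonglongrightarrow> g"
    using LIMSEQ_subseq_LIMSEQ[OF \<open>z \<longlonglongrightarrow> g\<close> \<open>strict_mono r\<close>] by (simp add: comp_def zu)
  have yK: "y (r k) \<in> closure K" for k
    using y closure_subset by blast
  show "g \<in> persp a ` closure K \<union> {d \<in> rec_cone (closure K). a \<bullet> d = 1}"
  proof (cases "l > 0")
    case True
    have "(\<lambda>k. (1 / u (r k)) *\<^sub>R (u (r k) *\<^sub>R y (r k))) \<longlonglongrightarrow> (1 / l) *\<^sub>R g"
      using ul True by (intro tendsto_intros zr) (simp_all add: comp_def)
    moreover have "u n \<noteq> 0" for n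
      using u(1)[of n] by simp
    ultimately have "(\<lambda>k. y (r k)) \<longlonglongrightarrow> (1 / l) *\<^sub>R g"
      by simp
    then have "(1 / l) *\<^sub>R g \<in> closure K"
      by (rule closed_sequentially[OF closed_closure yK])
    moreover have "persp a ((1 / l) *\<^sub>R g) = g"
      using ag True by (simp add: persp_def)
    ultimately show ?thesis
      by (metis UnI1 image_eqI)
  next
    case False
    then have "(u \<circ> r) \<longlonglongrightarrow> 0"
      using ul \<open>l \<in> {0..1/e}\<close> by simp
    then have "g \<in> rec_cone (closure K)"
      using \<open>convex K\<close> u(1) yK zr
      by (intro rec_cone_limit[where y="y \<circ> r" and t="u \<circ> r"]) (auto simp: less_imp_le)
    then show ?thesis
      using ag by simp
  qed
qed

lemma subset_closure_persp_image:
  assumes "K \<noteq> {}" and pos: "\<forall>y\<in>K. a \<bullet> y > e" and "e > 0"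
  shows "persp a ` closure K \<union> {d \<in> rec_cone (closure K). a \<bullet> d = 1} \<subseteq> closure (persp a ` K)"
proof -
  have posK: "\<forall>y\<in>closure K. a \<bullet> y > 0"
    using closure_subset_halfspace_ge[OF pos] \<open>e > 0\<close> by fastforce
  then have "continuous_on (closure K) (persp a)"
    unfolding persp_def by (intro continuous_intros) auto
  then have image: "persp a ` closure K \<subseteq> closure (persp a ` K)"
    by (rule image_closure_subset) (simp_all add: closure_subset)
  moreover have "d \<in> closure (persp a ` K)" if "d \<in> rec_cone (closure K)" "a \<bullet> d = 1" for d
  proof -
    obtain y where "y \<in> K"
      using \<open>K \<noteq> {}\<close> by blast
    then have "y \<in> closure K"
      using closure_subset by blast
    then have "persp a (y + real n *\<^sub>R d) \<in> closure (persp a ` K)" for n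
      using image \<open>d \<in> rec_cone (closure K)\<close> by (auto simp: rec_cone_def)
    moreover have "(\<lambda>n. persp a (y + real n *\<^sub>R d)) \<longlonglongrightarrow> d"
      using that \<open>y \<in> closure K\<close> posK by (intro persp_tendsto_rec_direction) auto
    ultimately show ?thesis
      by (rule closed_sequentially[OF closed_closure])
  qed
  ultimately show ?thesis
    by blast
qed

lemma convex_hull_persp_eq_slice:
  assumes "F \<noteq> {}" and pos: "\<forall>y\<in>F. a \<bullet> y > 0" and "bounded F"
  shows "convex hull (persp a ` F) = {g. \<exists>\<rho>\<ge>0. g \<in> scale_set \<rho> (convex hull F) \<and> a \<bullet> g = 1}"
proof -
  have "\<forall>y\<in>convex hull F. a \<bullet> y > 0"
    using convex_hull_subset_halfspace_gt[OF pos] by blast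
  then have "{g. \<exists>\<rho>\<ge>0. g \<in> scale_set \<rho> (convex hull F) \<and> a \<bullet> g = 1} = persp a ` (convex hull F)"
    by (rule hyperplane_slice_scale_set_bounded) (use assms in \<open>simp_all add: bounded_convex_hull\<close>)
  then show ?thesis
    using convex_hull_persp[OF pos] by simp
qed

lemma convex_hull_eq_slice_convex_hull_persp:
  fixes F :: "(real^'m) set" and a :: "real^'m" and e :: real and k :: 'm
  assumes "F \<noteq> {}" and pos: "\<forall>y\<in>F. a \<bullet> y > e" and "e > 0" "bounded F"
    and one: "\<forall>y\<in>F. y $ k = 1"
  shows "convex hull F = {h. \<exists>\<sigma>\<ge>0. h \<in> scale_set \<sigma> (convex hull (persp a ` F)) \<and> h $ k = 1}"
proof -
  define b :: "real^'m" where "b = axis k 1"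
  have coord: "h $ k = b \<bullet> h" for h
    by (simp add: b_def inner_axis')
  have pos0: "\<forall>y\<in>F. a \<bullet> y > 0"
    using pos \<open>e > 0\<close> by (meson less_trans)
  have posC: "\<forall>y\<in>convex hull F. a \<bullet> y > 0"
    using convex_hull_subset_halfspace_gt[OF pos0] by blast
  have oneC: "convex hull F \<subseteq> {h. b \<bullet> h = 1}"
    by (rule hull_minimal) (use one in \<open>auto simp: coord convex_hyperplane\<close>)
  have K: "convex hull (persp a ` F) = persp a ` (convex hull F)"
    using convex_hull_persp[OF pos0] .
  have inv: "persp b (persp a y) = y" if "y \<in> convex hull F" for y
    using that oneC posC by (intro persp_persp) auto
  have "\<forall>g\<in>convex hull (persp a ` F). b \<bullet> g > 0"
    unfolding K using oneC posC by (auto simp: persp_def)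
  moreover have "bounded (convex hull (persp a ` F))"
    using bounded_persp_image[OF pos \<open>e > 0\<close> \<open>bounded F\<close>] by (rule bounded_convex_hull)
  ultimately have "{h. \<exists>\<sigma>\<ge>0. h \<in> scale_set \<sigma> (convex hull (persp a ` F)) \<and> b \<bullet> h = 1}
      = persp b ` (convex hull (persp a ` F))"
    by (rule hyperplane_slice_scale_set_bounded) (simp add: \<open>F \<noteq> {}\<close>)
  also have "\<dots> = id ` (convex hull F)"
    unfolding K image_image by (rule image_cong) (simp_all add: inv)
  finally show ?thesis
    unfolding coord by simp
qed

lemma closure_convex_hull_persp_eq_slice:
  assumes "F \<noteq> {}" and pos: "\<forall>y\<in>F. a \<bullet> y > e" and "e > 0"
  shows "closure (convex hull (persp a ` F))
           = {g. \<exists>\<rho>\<ge>0. g \<in> scale_set \<rho> (closure (convex hull F)) \<and> a \<bullet> g = 1}"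
proof -
  have pos0: "\<forall>y\<in>F. a \<bullet> y > 0"
    using pos \<open>e > 0\<close> by (meson less_trans)
  have posC: "\<forall>y\<in>convex hull F. a \<bullet> y > e"
    using convex_hull_subset_halfspace_gt[OF pos] by blast
  then have "\<forall>y\<in>closure (convex hull F). a \<bullet> y > 0"
    using closure_subset_halfspace_ge \<open>e > 0\<close> by fastforce
  then have "{g. \<exists>\<rho>\<ge>0. g \<in> scale_set \<rho> (closure (convex hull F)) \<and> a \<bullet> g = 1}
      = persp a ` closure (convex hull F) \<union> {d \<in> rec_cone (closure (convex hull F)). a \<bullet> d = 1}"
    by (rule hyperplane_slice_scale_set)
  also have "\<dots> = closure (persp a ` (convex hull F))"
    using closure_persp_image_subset[OF convex_convex_hull posC \<open>e > 0\<close>]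
      subset_closure_persp_image[OF _ posC \<open>e > 0\<close>] \<open>F \<noteq> {}\<close>
    by (intro subset_antisym) simp_all
  finally show ?thesis
    by (simp add: convex_hull_persp[OF pos0])
qed

theorem theorem2:
  fixes X :: "(real^'n) set" and f :: "real^'n \<Rightarrow> real^'m" and \<alpha> :: "real^'m"
    and k1 :: 'm and \<epsilon> :: real
  assumes F_ne: "f ` X \<noteq> {}"
    and G_ne: "(\<lambda>x. (1 / (\<Sum>i\<in>UNIV. \<alpha> $ i * f x $ i)) *\<^sub>R f x) ` X \<noteq> {}"
    and eps: "\<epsilon> > 0" "\<forall>x\<in>X. (\<Sum>i\<in>UNIV. \<alpha> $ i * f x $ i) > \<epsilon>"
  shows
    "(bounded (f ` X) \<longrightarrow>
        convex hull ((\<lambda>x. (1 / (\<Sum>i\<in>UNIV. \<alpha> $ i * f x $ i)) *\<^sub>R f x) ` X)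
        = {g. \<exists>\<rho>\<ge>0. g \<in> scale_set \<rho> (convex hull (f ` X)) \<and> \<alpha> \<bullet> g = 1})
     \<and> (bounded (f ` X) \<and> (\<forall>x\<in>X. f x $ k1 = 1) \<longrightarrow>
        convex hull (f ` X)
        = {h. \<exists>\<sigma>\<ge>0. h \<in> scale_set \<sigma>
                 (convex hull ((\<lambda>x. (1 / (\<Sum>i\<in>UNIV. \<alpha> $ i * f x $ i)) *\<^sub>R f x) ` X))
               \<and> h $ k1 = 1})
     \<and> (closure (convex hull ((\<lambda>x. (1 / (\<Sum>i\<in>UNIV. \<alpha> $ i * f x $ i)) *\<^sub>R f x) ` X))
        = {g. \<exists>\<rho>\<ge>0. g \<in> scale_set \<rho> (closure (convex hull (f ` X))) \<and> \<alpha> \<bullet> g = 1})"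
proof -
  have G: "(\<lambda>x. (1 / (\<Sum>i\<in>UNIV. \<alpha> $ i * f x $ i)) *\<^sub>R f x) ` X = persp \<alpha> ` f ` X"
    by (simp add: inner_vec_def image_image persp_def)
  have pos: "\<forall>y\<in>f ` X. \<alpha> \<bullet> y > \<epsilon>"
    using eps(2) by (simp add: inner_vec_def)
  then have "\<forall>y\<in>f ` X. \<alpha> \<bullet> y > 0"
    using eps(1) by (meson less_trans)
  then show ?thesis
    unfolding G
    by (intro conjI impI convex_hull_persp_eq_slice[OF F_ne]
        convex_hull_eq_slice_convex_hull_persp[OF F_ne pos eps(1)]
        closure_convex_hull_persp_eq_slice[OF F_ne pos eps(1)]) auto
qed

end
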